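(* Let $d\geq 2$ and $1\leq d_1<d$ be integers, let $\mathbb{T}$ be the rooted $d$-ary tree and $\tilde{\mathbb{T}}$ its left-most $d_1$-regular subtree with the same root. Assign potential $u\in\mathbb{R}$ to every vertex of $\tilde{\mathbb{T}}$ other than the root and potential $0$ to every vertex of $\mathbb{T}\setminus\tilde{\mathbb{T}}$. For $\beta\geq 0$ let \[Z^{Det}_n(\beta,u)=\sum_{W}\exp\Big(\beta \sum_{y\in W\setminus\{\mathbf 0\}} U(y)\Big),\] where the sum is over all directed paths $W$ from the root $\mathbf 0$ to a vertex of generation $n$, and $U(y)$ is the potential of $y$. Then for any $\beta\geq 0$ and $u\in\mathbb{R}$, the limit $f^{Det}(\beta,u):=\lim_{n\to\infty}\frac1n\log Z^{Det}_n(\beta,u)$ exists and \[ f^{Det}(\beta,u)=\max\{\beta u+\log d_1,\ \log d\},\] and hence the critical curve $u^{Det}_c(\beta):=\inf\{u\in\mathbb{R}: f^{Det}(\beta,u)>\log d\}$ equals \[ u^{Det}_c(\beta)=\frac{\log(d/d_1)}{\beta}.\]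
   Context: The nodes of the rooted $d$-ary tree $\mathbb{T}$ are labeled $(k,j)$, $k\geq 0$ the generation and $1\leq j\leq d^k$; the root is $\mathbf 0=(0,1)$, and the offspring of $(k,j)$ are $(k+1,(j-1)d+\ell)$, $1\leq \ell\leq d$. The left-most $d_1$-regular subtree $\tilde{\mathbb{T}}$ contains the root, and for each $x=(k,j)\in\tilde{\mathbb{T}}$ its children in $\tilde{\mathbb{T}}$ are $(k+1,d(j-1)+\ell)$ for $1\leq \ell\leq d_1$. A directed path from the root to generation $n$ is a sequence $\mathbf 0=w(0),w(1),\dots,w(n)$ with each $w(m+1)$ a child of $w(m)$. *)

theory Defs
  imports "HOL-Analysis.Analysis"
begin

type_synonym node = "nat \<times> nat"  (* (generation k, position j), 1 <= j <= d^k *)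

definition root :: node where "root = (0, 1)"

definition is_child :: "nat \<Rightarrow> node \<Rightarrow> node \<Rightarrow> bool" where
  "is_child d x y \<longleftrightarrow> fst y = fst x + 1 \<and>
     (\<exists>l\<in>{1..d}. snd y = (snd x - 1) * d + l)"

inductive_set subtree :: "nat \<Rightarrow> nat \<Rightarrow> node set" for d d1 where
  root_in: "root \<in> subtree d d1"
| child_in: "(k, j) \<in> subtree d d1 \<Longrightarrow> l \<in> {1..d1} \<Longrightarrow>
      (k + 1, d * (j - 1) + l) \<in> subtree d d1"

definition dpaths :: "nat \<Rightarrow> nat \<Rightarrow> node list set" where
  "dpaths d n = {ws. length ws = n + 1 \<and> ws ! 0 = root \<and>
      (\<forall>m<n. is_child d (ws ! m) (ws ! (m + 1)))}"

definition potential :: "nat \<Rightarrow> nat \<Rightarrow> real \<Rightarrow> node \<Rightarrow> real" where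
  "potential d d1 u y = (if y \<in> subtree d d1 \<and> y \<noteq> root then u else 0)"

text \<open>Sum over the vertices of W other than the root (vertices of a path are
  distinct, lying in distinct generations, so summing over positions 1..n is the
  same as summing over the set W minus root).\<close>
definition ZDet :: "nat \<Rightarrow> nat \<Rightarrow> real \<Rightarrow> real \<Rightarrow> nat \<Rightarrow> real" where
  "ZDet d d1 \<beta> u n = (\<Sum>ws\<in>dpaths d n.
      exp (\<beta> * (\<Sum>m\<in>{1..n}. potential d d1 u (ws ! m))))"

definition fDet :: "nat \<Rightarrow> nat \<Rightarrow> real \<Rightarrow> real \<Rightarrow> real" where
  "fDet d d1 \<beta> u = lim (\<lambda>n. ln (ZDet d d1 \<beta> u n) / real n)"

text \<open>Critical curve, as an extended real (inf of the empty set is +infinity)\<close>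
definition ucDet :: "nat \<Rightarrow> nat \<Rightarrow> real \<Rightarrow> ereal" where
  "ucDet d d1 \<beta> = Inf (ereal ` {u. fDet d d1 \<beta> u > ln (real d)})"

end

theory Submission
  imports Defs "HOL-Real_Asymp.Real_Asymp"
begin

text \<open>Split the partition function according to whether the endpoint of the path lies
  in the subtree. A path ending in the subtree never left it, so these paths contribute
  exactly \<open>a\<^sup>n\<close> with \<open>a = d\<^sub>1 exp (\<beta> u)\<close>; the rest \<open>B\<^sub>n\<close> obeys
  \<open>B\<^sub>n\<^sub>+\<^sub>1 = (d - d\<^sub>1) a\<^sup>n + d B\<^sub>n\<close> and therefore lies between \<open>d\<^sup>n\<^sup>-\<^sup>1\<close> and
  \<open>n M\<^sup>n\<close> for \<open>M = max a d\<close>. Thus \<open>M\<^sup>n / d \<le> Z\<^sub>n \<le> (n + 1) M\<^sup>n\<close>, and the free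
  energy is \<open>ln M\<close>.\<close>

definition child :: "nat \<Rightarrow> node \<Rightarrow> nat \<Rightarrow> node" where
  "child d x l = (fst x + 1, (snd x - 1) * d + l)"

lemma is_child_iff: "is_child d x y \<longleftrightarrow> (\<exists>l\<in>{1..d}. y = child d x l)"
  unfolding is_child_def child_def by (cases y) auto

lemma child_ne_root: "child d x l \<noteq> root"
  by (simp add: child_def root_def)

lemma subtree_pos: "x \<in> subtree d d1 \<Longrightarrow> snd x \<ge> 1"
  by (induction rule: subtree.induct) (auto simp: root_def)

lemma mult_add_eq_mult_add_cancel:
  fixes q q' r r' d :: nat
  assumes "r < d" "r' < d" "d * q + r = d * q' + r'"
  shows "q = q' \<and> r = r'"
proof -
  have "(r + d * q) div d = (r' + d * q') div d" "(r + d * q) mod d = (r' + d * q') mod d"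
    using assms(3) by (simp_all add: add.commute)
  then show ?thesis using assms by simp
qed

lemma child_in_subtree_iff:
  assumes "snd x \<ge> 1" "l \<in> {1..d}" "d1 \<le> d"
  shows "child d x l \<in> subtree d d1 \<longleftrightarrow> x \<in> subtree d d1 \<and> l \<le> d1"
proof
  assume "x \<in> subtree d d1 \<and> l \<le> d1"
  then show "child d x l \<in> subtree d d1"
    using subtree.child_in[of "fst x" "snd x" d d1 l] assms
    by (auto simp: child_def mult.commute)
next
  assume "child d x l \<in> subtree d d1"
  then show "x \<in> subtree d d1 \<and> l \<le> d1"
  proof (cases rule: subtree.cases)
    case root_in
    then show ?thesis by (simp add: child_ne_root)
  next
    case (child_in k j l')
    have "j \<ge> 1" using subtree_pos[OF child_in(2)] by simp
    have "d * (snd x - 1) + (l - 1) = d * (j - 1) + (l' - 1)"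
      using child_in(1,3) assms by (auto simp: child_def mult.commute)
    then have "snd x - 1 = j - 1 \<and> l - 1 = l' - 1"
      by (rule mult_add_eq_mult_add_cancel[rotated 2]) (use assms child_in(3) in auto)
    then have "x = (k, j)" "l = l'"
      using child_in(1,3) assms \<open>j \<ge> 1\<close> by (auto simp: child_def prod_eq_iff)
    then show ?thesis using child_in by simp
  qed
qed

lemma dpaths_0: "dpaths d 0 = {[root]}"
  unfolding dpaths_def by (auto simp: length_Suc_conv)

lemma dpaths_Suc:
  "dpaths d (Suc n) = (\<lambda>(ws, l). ws @ [child d (ws ! n) l]) ` (dpaths d n \<times> {1..d})"
proof (rule set_eqI, rule iffI)
  fix ws' assume "ws' \<in> dpaths d (Suc n)"
  then have len: "length ws' = Suc (Suc n)" and r: "ws' ! 0 = root"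
    and c: "\<forall>m<Suc n. is_child d (ws' ! m) (ws' ! (m + 1))"
    by (auto simp: dpaths_def)
  define ws where "ws = take (Suc n) ws'"
  have snoc: "ws' = ws @ [ws' ! Suc n]"
    unfolding ws_def using len by (metis lessI take_Suc_conv_app_nth take_all_iff order_refl)
  have "ws \<in> dpaths d n" unfolding dpaths_def ws_def using len r c by auto
  moreover obtain l where "l \<in> {1..d}" "ws' ! Suc n = child d (ws' ! n) l"
    using c[rule_format, of n] by (auto simp: is_child_iff)
  moreover have "ws ! n = ws' ! n" unfolding ws_def by simp
  ultimately show "ws' \<in> (\<lambda>(ws, l). ws @ [child d (ws ! n) l]) ` (dpaths d n \<times> {1..d})"
    using snoc by (intro image_eqI[of _ _ "(ws, l)"]) auto
next
  fix ws' assume "ws' \<in> (\<lambda>(ws, l). ws @ [child d (ws ! n) l]) ` (dpaths d n \<times> {1..d})"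
  then obtain ws l where ws: "ws \<in> dpaths d n" and l: "l \<in> {1..d}"
    and ws': "ws' = ws @ [child d (ws ! n) l]"
    by auto
  have len: "length ws = n + 1" and "ws ! 0 = root"
    and c: "\<forall>m<n. is_child d (ws ! m) (ws ! (m + 1))"
    using ws by (auto simp: dpaths_def)
  moreover have "is_child d (ws' ! m) (ws' ! (m + 1))" if "m < Suc n" for m
    using that ws' len l c by (cases "m = n") (auto simp: nth_append is_child_iff)
  ultimately show "ws' \<in> dpaths d (Suc n)" using ws' by (auto simp: dpaths_def nth_append)
qed

lemma dpaths_last_pos: "ws \<in> dpaths d n \<Longrightarrow> snd (ws ! n) \<ge> 1"
proof (induction n arbitrary: ws)
  case 0
  then show ?case by (auto simp: dpaths_0 root_def)
next
  case (Suc n)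
  then obtain vs l where "vs \<in> dpaths d n" "ws = vs @ [child d (vs ! n) l]" "l \<in> {1..d}"
    by (auto simp: dpaths_Suc)
  moreover have "length vs = n + 1" using calculation by (auto simp: dpaths_def)
  ultimately show ?case by (auto simp: child_def nth_append)
qed

lemma sum_dpaths_Suc:
  "(\<Sum>ws\<in>dpaths d (Suc n). f ws) = (\<Sum>ws\<in>dpaths d n. \<Sum>l\<in>{1..d}. f (ws @ [child d (ws ! n) l]))"
proof -
  have "inj_on (\<lambda>(ws, l). ws @ [child d (ws ! n) l]) (dpaths d n \<times> {1..d})"
    by (auto simp: inj_on_def child_def)
  then show ?thesis
    unfolding dpaths_Suc by (simp add: sum.reindex sum.cartesian_product split_def)
qed

definition path_weight :: "nat \<Rightarrow> nat \<Rightarrow> real \<Rightarrow> real \<Rightarrow> nat \<Rightarrow> node list \<Rightarrow> real" where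
  "path_weight d d1 \<beta> u n ws = exp (\<beta> * (\<Sum>m\<in>{1..n}. potential d d1 u (ws ! m)))"

definition ZDet_in :: "nat \<Rightarrow> nat \<Rightarrow> real \<Rightarrow> real \<Rightarrow> nat \<Rightarrow> real" where
  "ZDet_in d d1 \<beta> u n =
     (\<Sum>ws\<in>dpaths d n. if ws ! n \<in> subtree d d1 then path_weight d d1 \<beta> u n ws else 0)"

definition ZDet_out :: "nat \<Rightarrow> nat \<Rightarrow> real \<Rightarrow> real \<Rightarrow> nat \<Rightarrow> real" where
  "ZDet_out d d1 \<beta> u n =
     (\<Sum>ws\<in>dpaths d n. if ws ! n \<in> subtree d d1 then 0 else path_weight d d1 \<beta> u n ws)"

lemma ZDet_eq_in_plus_out: "ZDet d d1 \<beta> u n = ZDet_in d d1 \<beta> u n + ZDet_out d d1 \<beta> u n"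
  unfolding ZDet_def ZDet_in_def ZDet_out_def path_weight_def
  by (simp add: sum.distrib[symmetric] if_distrib cong: if_cong)

lemma ZDet_out_nonneg: "ZDet_out d d1 \<beta> u n \<ge> 0"
  unfolding ZDet_out_def path_weight_def by (intro sum_nonneg) auto

lemma path_weight_extend:
  assumes ws: "ws \<in> dpaths d n" and l: "l \<in> {1..d}" and "d1 \<le> d"
  defines "x \<equiv> child d (ws ! n) l"
  shows "(ws @ [x]) ! Suc n \<in> subtree d d1 \<longleftrightarrow> ws ! n \<in> subtree d d1 \<and> l \<le> d1"
    and "path_weight d d1 \<beta> u (Suc n) (ws @ [x]) = path_weight d d1 \<beta> u n ws *
           (if ws ! n \<in> subtree d d1 \<and> l \<le> d1 then exp (\<beta> * u) else 1)"
proof -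
  have len: "length ws = n + 1" using ws by (simp add: dpaths_def)
  have x_in: "x \<in> subtree d d1 \<longleftrightarrow> ws ! n \<in> subtree d d1 \<and> l \<le> d1"
    unfolding x_def using child_in_subtree_iff dpaths_last_pos[OF ws] l assms(3) by blast
  then show "(ws @ [x]) ! Suc n \<in> subtree d d1 \<longleftrightarrow> ws ! n \<in> subtree d d1 \<and> l \<le> d1"
    using len by (simp add: nth_append)
  have "(\<Sum>m\<in>{1..Suc n}. potential d d1 u ((ws @ [x]) ! m))
      = (\<Sum>m\<in>{1..n}. potential d d1 u (ws ! m)) + potential d d1 u x"
    using len by (simp add: nth_append)
  then show "path_weight d d1 \<beta> u (Suc n) (ws @ [x]) = path_weight d d1 \<beta> u n ws *
           (if ws ! n \<in> subtree d d1 \<and> l \<le> d1 then exp (\<beta> * u) else 1)"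
    using x_in by (simp add: path_weight_def potential_def x_def child_ne_root
        distrib_left exp_add)
qed

lemma sum_if_le_eq:
  assumes "d1 \<le> d"
  shows "(\<Sum>l\<in>{1..d}. if l \<le> d1 then (x::real) else y) = real d1 * x + real (d - d1) * y"
proof -
  have "{1..d} \<inter> {l. l \<le> d1} = {1..d1}" "{1..d} \<inter> - {l. l \<le> d1} = {d1<..d}"
    using assms by auto
  then show ?thesis by (simp add: sum.If_cases)
qed

lemma ZDet_in_Suc:
  assumes "d1 \<le> d"
  shows "ZDet_in d d1 \<beta> u (Suc n) = real d1 * exp (\<beta> * u) * ZDet_in d d1 \<beta> u n"
proof -
  have "ZDet_in d d1 \<beta> u (Suc n) = (\<Sum>ws\<in>dpaths d n. \<Sum>l\<in>{1..d}. if l \<le> d1 then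
      (if ws ! n \<in> subtree d d1 then path_weight d d1 \<beta> u n ws * exp (\<beta> * u) else 0) else 0)"
    unfolding ZDet_in_def sum_dpaths_Suc
    by (intro sum.cong refl) (simp add: path_weight_extend assms)
  also have "\<dots> = real d1 * exp (\<beta> * u) * ZDet_in d d1 \<beta> u n"
    unfolding ZDet_in_def sum_if_le_eq[OF assms] sum_distrib_left
    by (intro sum.cong refl) simp
  finally show ?thesis .
qed

lemma ZDet_out_Suc:
  assumes "d1 \<le> d"
  shows "ZDet_out d d1 \<beta> u (Suc n) =
           real (d - d1) * ZDet_in d d1 \<beta> u n + real d * ZDet_out d d1 \<beta> u n"
proof -
  have "ZDet_out d d1 \<beta> u (Suc n) = (\<Sum>ws\<in>dpaths d n. \<Sum>l\<in>{1..d}. if l \<le> d1 then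
      (if ws ! n \<in> subtree d d1 then 0 else path_weight d d1 \<beta> u n ws)
      else path_weight d d1 \<beta> u n ws)"
    unfolding ZDet_out_def sum_dpaths_Suc
    by (intro sum.cong refl) (simp add: path_weight_extend assms)
  also have "\<dots> = real (d - d1) * ZDet_in d d1 \<beta> u n + real d * ZDet_out d d1 \<beta> u n"
    unfolding ZDet_in_def ZDet_out_def sum_if_le_eq[OF assms] sum_distrib_left
      sum.distrib[symmetric]
    using assms by (intro sum.cong refl) (auto simp: algebra_simps of_nat_diff)
  finally show ?thesis .
qed

lemma ZDet_in_eq_power:
  assumes "d1 \<le> d"
  shows "ZDet_in d d1 \<beta> u n = (real d1 * exp (\<beta> * u)) ^ n"
proof (induction n)
  case 0
  then show ?case by (simp add: ZDet_in_def path_weight_def dpaths_0 subtree.root_in)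
next
  case (Suc n)
  then show ?case by (simp add: ZDet_in_Suc[OF assms])
qed

lemma ZDet_out_0: "ZDet_out d d1 \<beta> u 0 = 0"
  by (simp add: ZDet_out_def dpaths_0 subtree.root_in)

lemma ZDet_out_lower:
  assumes "d1 < d" "n \<ge> 1"
  shows "real d ^ (n - 1) \<le> ZDet_out d d1 \<beta> u n"
  using assms(2)
proof (induction n rule: dec_induct)
  case base
  show ?case
    using ZDet_out_Suc[of d1 d \<beta> u 0] assms(1) by (simp add: ZDet_in_eq_power ZDet_out_0)
next
  case (step n)
  have "real d ^ (Suc n - 1) = real d * real d ^ (n - 1)"
    using step(1) by (cases n) auto
  also have "\<dots> \<le> real d * ZDet_out d d1 \<beta> u n"
    using step(3) by (rule mult_left_mono) simp
  also have "\<dots> \<le> ZDet_out d d1 \<beta> u (Suc n)"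
    using ZDet_out_Suc[of d1 d \<beta> u n] assms(1) by (simp add: ZDet_in_eq_power)
  finally show ?case .
qed

lemma ZDet_out_upper:
  assumes "d1 < d" "real d1 * exp (\<beta> * u) \<le> M" "real d \<le> M"
  shows "ZDet_out d d1 \<beta> u n \<le> real n * M ^ n"
proof (induction n)
  case 0
  then show ?case by (simp add: ZDet_out_0)
next
  case (Suc n)
  have "real (d - d1) * (real d1 * exp (\<beta> * u)) ^ n \<le> real d * M ^ n"
    using assms by (intro mult_mono power_mono) auto
  also have "\<dots> \<le> M * M ^ n"
    using assms(3) by (rule mult_right_mono) (use assms(3) in simp)
  finally have "real (d - d1) * ZDet_in d d1 \<beta> u n \<le> M ^ Suc n"
    using assms(1) by (simp add: ZDet_in_eq_power)
  moreover have "real d * ZDet_out d d1 \<beta> u n \<le> M * (real n * M ^ n)"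
    using Suc ZDet_out_nonneg[of d d1 \<beta> u n] assms(3) by (intro mult_mono) auto
  ultimately show ?case
    using ZDet_out_Suc[of d1 d \<beta> u n] assms(1) by (simp add: algebra_simps)
qed

lemma ZDet_bounds:
  fixes \<beta> u :: real
  assumes "d \<ge> 2" "1 \<le> d1" "d1 < d"
  defines "M \<equiv> max (real d1 * exp (\<beta> * u)) (real d)"
  shows "M ^ n / real d \<le> ZDet d d1 \<beta> u n" and "ZDet d d1 \<beta> u n \<le> (real n + 1) * M ^ n"
proof -
  let ?a = "real d1 * exp (\<beta> * u)"
  have M_nonneg: "M \<ge> 0" unfolding M_def by linarith
  have Z: "ZDet d d1 \<beta> u n = ?a ^ n + ZDet_out d d1 \<beta> u n"
    using assms(3) by (simp add: ZDet_eq_in_plus_out ZDet_in_eq_power)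
  show "M ^ n / real d \<le> ZDet d d1 \<beta> u n"
  proof (cases "?a \<ge> real d \<or> n = 0")
    case True
    have "M ^ n / real d \<le> M ^ n / 1"
      using assms(1) M_nonneg by (intro divide_left_mono) auto
    also have "\<dots> = ?a ^ n" using True by (auto simp: M_def)
    also have "\<dots> \<le> ZDet d d1 \<beta> u n" using Z ZDet_out_nonneg[of d d1 \<beta> u n] by simp
    finally show ?thesis .
  next
    case False
    then have "M ^ n / real d = real d ^ (n - 1)"
      using assms(1) by (cases n) (auto simp: M_def)
    also have "\<dots> \<le> ZDet_out d d1 \<beta> u n"
      using ZDet_out_lower[of d1 d n] assms(3) False by simp
    finally show ?thesis using Z by (simp add: add_increasing)
  qed
  have "?a ^ n \<le> M ^ n" unfolding M_def by (intro power_mono) auto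
  moreover have "ZDet_out d d1 \<beta> u n \<le> real n * M ^ n"
    using assms(3) by (intro ZDet_out_upper) (auto simp: M_def)
  ultimately show "ZDet d d1 \<beta> u n \<le> (real n + 1) * M ^ n"
    using Z by (simp add: algebra_simps)
qed

lemma ln_div_tendsto_of_polynomial_bounds:
  fixes Z :: "nat \<Rightarrow> real"
  assumes "c > 0" "M > 0"
    and lower: "\<And>n. c * M ^ n \<le> Z n" and upper: "\<And>n. Z n \<le> (real n + 1) * M ^ n"
  shows "(\<lambda>n. ln (Z n) / real n) \<longlonglongrightarrow> ln M"
proof (rule tendsto_sandwich)
  have Z_pos: "Z n > 0" for n
    using lower[of n] assms(1,2) by (smt (verit) mult_pos_pos zero_less_power)
  have "ln M + ln c / real n \<le> ln (Z n) / real n" if "n \<ge> 1" for n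
  proof -
    have "ln M + ln c / real n = ln (c * M ^ n) / real n"
      using that assms by (simp add: ln_mult ln_realpow field_simps)
    also have "\<dots> \<le> ln (Z n) / real n"
      using assms lower[of n] Z_pos[of n] by (intro divide_right_mono) auto
    finally show ?thesis .
  qed
  then show "\<forall>\<^sub>F n in sequentially. ln M + ln c / real n \<le> ln (Z n) / real n"
    using eventually_ge_at_top[of 1] by (rule eventually_mono[rotated])
  have "ln (Z n) / real n \<le> ln M + ln (real n + 1) / real n" if "n \<ge> 1" for n
  proof -
    have "ln (Z n) / real n \<le> ln ((real n + 1) * M ^ n) / real n"
      using upper[of n] Z_pos[of n] by (intro divide_right_mono) auto
    also have "\<dots> = (ln (real n + 1) + real n * ln M) / real n"
      using assms by (simp add: ln_mult ln_realpow)
    also have "\<dots> = ln M + ln (real n + 1) / real n"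
      using that by (simp add: field_simps)
    finally show ?thesis .
  qed
  then show "\<forall>\<^sub>F n in sequentially. ln (Z n) / real n \<le> ln M + ln (real n + 1) / real n"
    using eventually_ge_at_top[of 1] by (rule eventually_mono[rotated])
  show "(\<lambda>n. ln M + ln c / real n) \<longlonglongrightarrow> ln M" by real_asymp
  show "(\<lambda>n. ln M + ln (real n + 1) / real n) \<longlonglongrightarrow> ln M" by real_asymp
qed

lemma ZDet_growth_rate:
  assumes "d \<ge> 2" "1 \<le> d1" "d1 < d"
  shows "(\<lambda>n. ln (ZDet d d1 \<beta> u n) / real n) \<longlonglongrightarrow> max (\<beta> * u + ln (real d1)) (ln (real d))"
proof -
  define M where "M = max (real d1 * exp (\<beta> * u)) (real d)"
  have "M > 0" using assms(1) by (simp add: M_def)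
  have "ln M = max (ln (real d1 * exp (\<beta> * u))) (ln (real d))"
    using assms(1,2) by (simp add: M_def max_def)
  also have "\<dots> = max (\<beta> * u + ln (real d1)) (ln (real d))"
    using assms(2) by (simp add: ln_mult)
  finally have lnM: "ln M = max (\<beta> * u + ln (real d1)) (ln (real d))" .
  have "(\<lambda>n. ln (ZDet d d1 \<beta> u n) / real n) \<longlonglongrightarrow> ln M"
  proof (rule ln_div_tendsto_of_polynomial_bounds[OF _ \<open>M > 0\<close>])
    show "1 / real d * M ^ n \<le> ZDet d d1 \<beta> u n" for n
      using ZDet_bounds(1)[OF assms] by (simp add: M_def)
    show "ZDet d d1 \<beta> u n \<le> (real n + 1) * M ^ n" for n
      using ZDet_bounds(2)[OF assms] by (simp add: M_def)
  qed (use assms(1) in simp)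
  then show ?thesis by (simp add: lnM)
qed

lemma fDet_eq:
  assumes "d \<ge> 2" "1 \<le> d1" "d1 < d"
  shows "fDet d d1 \<beta> u = max (\<beta> * u + ln (real d1)) (ln (real d))"
  unfolding fDet_def using ZDet_growth_rate[OF assms] by (rule limI)

lemma ucDet_pos:
  assumes "d \<ge> 2" "1 \<le> d1" "d1 < d" "\<beta> > 0"
  shows "ucDet d d1 \<beta> = ereal (ln (real d / real d1) / \<beta>)"
proof -
  define c where "c = ln (real d / real d1) / \<beta>"
  have "fDet d d1 \<beta> u > ln (real d) \<longleftrightarrow> u > c" for u
  proof -
    have "fDet d d1 \<beta> u > ln (real d) \<longleftrightarrow> ln (real d) - ln (real d1) < \<beta> * u"
      unfolding fDet_eq[OF assms(1-3)] by auto
    also have "\<dots> \<longleftrightarrow> ln (real d / real d1) < u * \<beta>"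
      using assms(2,3) by (simp add: ln_div mult.commute)
    also have "\<dots> \<longleftrightarrow> u > c"
      unfolding c_def using assms(4) by (rule pos_divide_less_eq[symmetric])
    finally show ?thesis .
  qed
  then have "{u. fDet d d1 \<beta> u > ln (real d)} = {c<..}" by auto
  then have "ucDet d d1 \<beta> = (INF u\<in>{c<..}. ereal u)" by (simp add: ucDet_def)
  also have "\<dots> = ereal c" by (simp add: ereal_Inf'[symmetric])
  finally show ?thesis by (simp add: c_def)
qed

lemma ucDet_0:
  assumes "d \<ge> 2" "1 \<le> d1" "d1 < d"
  shows "ucDet d d1 0 = \<infinity>"
proof -
  have "{u. fDet d d1 0 u > ln (real d)} = {}"
    using assms by (auto simp: fDet_eq)
  then show ?thesis by (simp add: ucDet_def top_ereal_def)
qed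

theorem theorem1p1:
  fixes d d1 :: nat
  assumes "d \<ge> 2" and "1 \<le> d1" and "d1 < d"
  shows "(\<forall>\<beta> u. \<beta> \<ge> 0 \<longrightarrow>
            ((\<lambda>n. ln (ZDet d d1 \<beta> u n) / real n)
               \<longlonglongrightarrow> max (\<beta> * u + ln (real d1)) (ln (real d)))
            \<and> fDet d d1 \<beta> u = max (\<beta> * u + ln (real d1)) (ln (real d)))
       \<and> (\<forall>\<beta>. \<beta> > 0 \<longrightarrow> ucDet d d1 \<beta> = ereal (ln (real d / real d1) / \<beta>))
       \<and> ucDet d d1 0 = \<infinity>"
  using ZDet_growth_rate[OF assms] fDet_eq[OF assms] ucDet_pos[OF assms] ucDet_0[OF assms]
  by blast

end
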